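(* Assume $\{\beta\in\mathbb{R}^p: A\beta\le b,\ \Gamma\beta=d\}\neq\emptyset$. Run the generalized SMO algorithm with $\tau=0$ from some $\theta^0\in\mathcal F$ and suppose it never stops ($\Delta^k>0$ for all $k$). Let $K\subseteq\mathbb{N}$ be an infinite set of iterations at which the update is not clipped. Then $\Delta^k\to0$ as $k\to\infty$ with $k\in K$; in particular each of $\Delta_1,\Delta_2,\Delta_3,\Delta_4$ computed at $\theta^k$ tends to $0$ along $K$.
   Context: Setup. Let $n,p,k_1,k_2\ge1$, $X\in\mathbb{R}^{n\times p}$ with rows $X_{i:}$, $y\in\mathbb{R}^n$, $C>0$, $\nu\in(0,1]$, $A\in\mathbb{R}^{k_1\times p}$, $b\in\mathbb{R}^{k_1}$, $\Gamma\in\mathbb{R}^{k_2\times p}$, $d\in\mathbb{R}^{k_2}$; $\mathbf e$ is the all-ones vector and $Q=XX^T\in\mathbb{R}^{n\times n}$. Dual variables are $\theta=(\alpha,\alpha^*,\gamma,\mu)\in\mathbb{R}^n\times\mathbb{R}^n\times\mathbb{R}^{k_1}\times\mathbb{R}^{k_2}$. Let $M$ be the $(2n+k_1+k_2)\times p$ matrix with row blocks $X,-X,A,-\Gamma$, $\bar Q=MM^T$, $l=(y,-y,b,-d)$, and $f(\theta)=\frac12\theta^T\bar Q\theta+l^T\theta$. The feasible set $\mathcal F$ consists of $\theta$ with $0\le\alpha_i,\alpha_i^*\le C/n$ for all $i$, $\mathbf e^T(\alpha+\alpha^* )\le C\nu$, $\mathbf e^T(\alpha-\alpha^* )=0$,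 $\gamma_j\ge0$ for all $j$. Generalized SMO algorithm. Assume the rows of $X$ are pairwise distinct and no row of $A$ or $\Gamma$ is zero. Let $I_{up}(\alpha)=\{i:\alpha_i<C/n\}$, $I_{low}(\alpha)=\{i:\alpha_i>0\}$, and $I^*_{up},I^*_{low}$ the same sets for $\alpha^*$. Fix $\tau\ge0$ and $\theta^0\in\mathcal F$. At iteration $k$, with all gradients evaluated at $\theta^k$: pick $i\in\arg\min_{I_{up}(\alpha^k)}\nabla_{\alpha_i}f$, $j\in\arg\max_{I_{low}(\alpha^k)}\nabla_{\alpha_j}f$ and set $\Delta_1=\max(\nabla_{\alpha_j}f-\nabla_{\alpha_i}f,0)$ ($\Delta_1=0$ if either set is empty); define $i^*,j^*,\Delta_2$ identically for $\alpha^*$; $\Delta_3=\max(-\min_{s}\nabla_{\gamma_s}f,0)$; $\Delta_4=\max_s|\nabla_{\mu_s}f|$; $\Delta^k=\max(\Delta_1,\Delta_2,\Delta_3,\Delta_4)$. If $\Delta^k\le\tau$ stop; otherwise update the first block (in the order $\alpha,\alpha^*,\gamma,\mu$) whose $\Delta_m$ equals $\Delta^k$, leaving all other coordinates unchanged: Block $\alpha$: $t_q=-\frac{\nabla_{\alpha_i}f-\nabla_{\alpha_j}f}{Q_{ii}+Q_{jj}-2Q_{ij}}$, $I_1=\max(-\alpha_i^k,\alpha_j^k-C/n)$, $I_2=\min(\alpha_j^k,C/n-\alpha_i^k)$, $t^*=\min(\max(I_1,t_q),I_2)$, $\alpha_i^{k+1}=\alpha_i^k+t^*$, $\alpha_j^{k+1}=\alpha_j^k-t^*$.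 Block $\alpha^*$: the same formulas with $\alpha^*$, $(i^*,j^* )$, $\nabla_{\alpha^*}f$ and the same matrix $Q$. Block $\gamma$: $u\in\arg\min_s\nabla_{\gamma_s}f$, $\gamma_u^{k+1}=\max\big(\gamma_u^k-\nabla_{\gamma_u}f/(AA^T)_{uu},0\big)$. Block $\mu$: $u\in\arg\max_s|\nabla_{\mu_s}f|$, $\mu_u^{k+1}=\mu_u^k-\nabla_{\mu_u}f/(\Gamma\Gamma^T)_{uu}$. Clipping. An update in block $\alpha$ or $\alpha^*$ is called clipped if $t^*\neq t_q$; an update in block $\gamma$ is clipped if $\gamma_u^k-\nabla_{\gamma_u}f(\theta^k)/(AA^T)_{uu}<0$; updates in block $\mu$ are never clipped. *)

theory Defs
  imports Complex_Main
begin

text \<open>Problem data. Vectors are functions nat => real, only indices below the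
stated dimension matter; matrices are nat => nat => real (row, column).\<close>

record svr_data =
  nn  :: nat
  pp  :: nat
  kk1 :: nat
  kk2 :: nat
  Xm  :: "nat \<Rightarrow> nat \<Rightarrow> real"
  yv  :: "nat \<Rightarrow> real"
  Cc  :: real
  nuu :: real
  Am  :: "nat \<Rightarrow> nat \<Rightarrow> real"
  bv  :: "nat \<Rightarrow> real"
  Gm  :: "nat \<Rightarrow> nat \<Rightarrow> real"
  dv  :: "nat \<Rightarrow> real"

text \<open>The dual vector theta is a single vector of length N = 2n+k1+k2 with
blocks alpha = [0,n), alpha* = [n,2n), gamma = [2n,2n+k1), mu = [2n+k1,N).\<close>

definition dimN :: "svr_data \<Rightarrow> nat" where
  "dimN P = 2 * nn P + kk1 P + kk2 P"

definition Mrow :: "svr_data \<Rightarrow> nat \<Rightarrow> nat \<Rightarrow> real" where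
  "Mrow P r t =
    (if r < nn P then Xm P r t
     else if r < 2 * nn P then - Xm P (r - nn P) t
     else if r < 2 * nn P + kk1 P then Am P (r - 2 * nn P) t
     else - Gm P (r - 2 * nn P - kk1 P) t)"

definition Qbar :: "svr_data \<Rightarrow> nat \<Rightarrow> nat \<Rightarrow> real" where
  "Qbar P r s = (\<Sum>t<pp P. Mrow P r t * Mrow P s t)"

definition lvec :: "svr_data \<Rightarrow> nat \<Rightarrow> real" where
  "lvec P r =
    (if r < nn P then yv P r
     else if r < 2 * nn P then - yv P (r - nn P)
     else if r < 2 * nn P + kk1 P then bv P (r - 2 * nn P)
     else - dv P (r - 2 * nn P - kk1 P))"

definition fobj :: "svr_data \<Rightarrow> (nat \<Rightarrow> real) \<Rightarrow> real" where
  "fobj P th = (1/2) * (\<Sum>r<dimN P. \<Sum>s<dimN P. th r * Qbar P r s * th s)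
               + (\<Sum>r<dimN P. lvec P r * th r)"

definition grad :: "svr_data \<Rightarrow> (nat \<Rightarrow> real) \<Rightarrow> nat \<Rightarrow> real" where
  "grad P th r = (\<Sum>s<dimN P. Qbar P r s * th s) + lvec P r"

definition alphaB :: "svr_data \<Rightarrow> (nat \<Rightarrow> real) \<Rightarrow> nat \<Rightarrow> real" where
  "alphaB P th i = th i"
definition alphasB :: "svr_data \<Rightarrow> (nat \<Rightarrow> real) \<Rightarrow> nat \<Rightarrow> real" where
  "alphasB P th i = th (nn P + i)"
definition gammaB :: "svr_data \<Rightarrow> (nat \<Rightarrow> real) \<Rightarrow> nat \<Rightarrow> real" where
  "gammaB P th j = th (2 * nn P + j)"
definition muB :: "svr_data \<Rightarrow> (nat \<Rightarrow> real) \<Rightarrow> nat \<Rightarrow> real" where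
  "muB P th j = th (2 * nn P + kk1 P + j)"

definition gA :: "svr_data \<Rightarrow> (nat \<Rightarrow> real) \<Rightarrow> nat \<Rightarrow> real" where
  "gA P th i = grad P th i"
definition gAs :: "svr_data \<Rightarrow> (nat \<Rightarrow> real) \<Rightarrow> nat \<Rightarrow> real" where
  "gAs P th i = grad P th (nn P + i)"
definition gG :: "svr_data \<Rightarrow> (nat \<Rightarrow> real) \<Rightarrow> nat \<Rightarrow> real" where
  "gG P th j = grad P th (2 * nn P + j)"
definition gM :: "svr_data \<Rightarrow> (nat \<Rightarrow> real) \<Rightarrow> nat \<Rightarrow> real" where
  "gM P th j = grad P th (2 * nn P + kk1 P + j)"

definition Qm :: "svr_data \<Rightarrow> nat \<Rightarrow> nat \<Rightarrow> real" where
  "Qm P i j = (\<Sum>t<pp P. Xm P i t * Xm P j t)"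
definition AAt :: "svr_data \<Rightarrow> nat \<Rightarrow> nat \<Rightarrow> real" where
  "AAt P i j = (\<Sum>t<pp P. Am P i t * Am P j t)"
definition GGt :: "svr_data \<Rightarrow> nat \<Rightarrow> nat \<Rightarrow> real" where
  "GGt P i j = (\<Sum>t<pp P. Gm P i t * Gm P j t)"

definition feasible :: "svr_data \<Rightarrow> (nat \<Rightarrow> real) \<Rightarrow> bool" where
  "feasible P th \<longleftrightarrow>
     (\<forall>i<nn P. 0 \<le> alphaB P th i \<and> alphaB P th i \<le> Cc P / real (nn P)
             \<and> 0 \<le> alphasB P th i \<and> alphasB P th i \<le> Cc P / real (nn P))
     \<and> (\<Sum>i<nn P. alphaB P th i + alphasB P th i) \<le> Cc P * nuu P
     \<and> (\<Sum>i<nn P. alphaB P th i - alphasB P th i) = 0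
     \<and> (\<forall>j<kk1 P. 0 \<le> gammaB P th j)"

definition Iup :: "svr_data \<Rightarrow> (nat \<Rightarrow> real) \<Rightarrow> nat set" where
  "Iup P a = {i. i < nn P \<and> a i < Cc P / real (nn P)}"
definition Ilow :: "svr_data \<Rightarrow> (nat \<Rightarrow> real) \<Rightarrow> nat set" where
  "Ilow P a = {i. i < nn P \<and> 0 < a i}"

definition delta_pair :: "svr_data \<Rightarrow> (nat \<Rightarrow> real) \<Rightarrow> (nat \<Rightarrow> real) \<Rightarrow> real" where
  "delta_pair P a g =
     (if Iup P a = {} \<or> Ilow P a = {} then 0
      else max (Max (g ` Ilow P a) - Min (g ` Iup P a)) 0)"

definition Delta1 :: "svr_data \<Rightarrow> (nat \<Rightarrow> real) \<Rightarrow> real" where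
  "Delta1 P th = delta_pair P (alphaB P th) (gA P th)"
definition Delta2 :: "svr_data \<Rightarrow> (nat \<Rightarrow> real) \<Rightarrow> real" where
  "Delta2 P th = delta_pair P (alphasB P th) (gAs P th)"
definition Delta3 :: "svr_data \<Rightarrow> (nat \<Rightarrow> real) \<Rightarrow> real" where
  "Delta3 P th = max (- Min (gG P th ` {..<kk1 P})) 0"
definition Delta4 :: "svr_data \<Rightarrow> (nat \<Rightarrow> real) \<Rightarrow> real" where
  "Delta4 P th = Max ((\<lambda>s. \<bar>gM P th s\<bar>) ` {..<kk2 P})"
definition Delta :: "svr_data \<Rightarrow> (nat \<Rightarrow> real) \<Rightarrow> real" where
  "Delta P th = max (max (Delta1 P th) (Delta2 P th)) (max (Delta3 P th) (Delta4 P th))"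

definition pair_tq :: "svr_data \<Rightarrow> (nat \<Rightarrow> real) \<Rightarrow> nat \<Rightarrow> nat \<Rightarrow> real" where
  "pair_tq P g i j = - (g i - g j) / (Qm P i i + Qm P j j - 2 * Qm P i j)"

definition pair_tstar :: "svr_data \<Rightarrow> (nat \<Rightarrow> real) \<Rightarrow> (nat \<Rightarrow> real) \<Rightarrow> nat \<Rightarrow> nat \<Rightarrow> real" where
  "pair_tstar P a g i j =
     (let I1 = max (- a i) (a j - Cc P / real (nn P));
          I2 = min (a j) (Cc P / real (nn P) - a i)
      in min (max I1 (pair_tq P g i j)) I2)"

definition pair_choice :: "svr_data \<Rightarrow> (nat \<Rightarrow> real) \<Rightarrow> (nat \<Rightarrow> real) \<Rightarrow> nat \<Rightarrow> nat \<Rightarrow> bool" where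
  "pair_choice P a g i j \<longleftrightarrow>
     i \<in> Iup P a \<and> g i = Min (g ` Iup P a) \<and>
     j \<in> Ilow P a \<and> g j = Max (g ` Ilow P a)"

text \<open>One iteration of the generalized SMO algorithm (the stopping test is
handled separately): smo_step P th th' clipped holds iff th' is a possible
next iterate from th (for some admissible argmin/argmax choice) and clipped
says whether that update was clipped.\<close>

definition smo_step :: "svr_data \<Rightarrow> (nat \<Rightarrow> real) \<Rightarrow> (nat \<Rightarrow> real) \<Rightarrow> bool \<Rightarrow> bool" where
  "smo_step P th th' clipped \<longleftrightarrow>
    (let D = Delta P th; n = nn P; k1 = kk1 P in
     (Delta1 P th = D \<and>
        (\<exists>i j. pair_choice P (alphaB P th) (gA P th) i j \<and>
          (let ts = pair_tstar P (alphaB P th) (gA P th) i j in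
             th' = th(i := th i + ts, j := th j - ts) \<and>
             clipped = (ts \<noteq> pair_tq P (gA P th) i j))))
   \<or> (Delta1 P th \<noteq> D \<and> Delta2 P th = D \<and>
        (\<exists>i j. pair_choice P (alphasB P th) (gAs P th) i j \<and>
          (let ts = pair_tstar P (alphasB P th) (gAs P th) i j in
             th' = th(n + i := th (n + i) + ts, n + j := th (n + j) - ts) \<and>
             clipped = (ts \<noteq> pair_tq P (gAs P th) i j))))
   \<or> (Delta1 P th \<noteq> D \<and> Delta2 P th \<noteq> D \<and> Delta3 P th = D \<and>
        (\<exists>u<k1. gG P th u = Min (gG P th ` {..<k1}) \<and>
          (let v = gammaB P th u - gG P th u / AAt P u u in
             th' = th(2 * n + u := max v 0) \<and> clipped = (v < 0))))
   \<or> (Delta1 P th \<noteq> D \<and> Delta2 P th \<noteq> D \<and> Delta3 P th \<noteq> D \<and> Delta4 P th = D \<and>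
        (\<exists>u<kk2 P. \<bar>gM P th u\<bar> = Max ((\<lambda>s. \<bar>gM P th s\<bar>) ` {..<kk2 P}) \<and>
             th' = th(2 * n + k1 + u := muB P th u - gM P th u / GGt P u u) \<and>
             clipped = False)))"

definition valid_data :: "svr_data \<Rightarrow> bool" where
  "valid_data P \<longleftrightarrow>
     1 \<le> nn P \<and> 1 \<le> pp P \<and> 1 \<le> kk1 P \<and> 1 \<le> kk2 P \<and>
     0 < Cc P \<and> 0 < nuu P \<and> nuu P \<le> 1 \<and>
     (\<forall>i<nn P. \<forall>j<nn P. i \<noteq> j \<longrightarrow> (\<exists>t<pp P. Xm P i t \<noteq> Xm P j t)) \<and>
     (\<forall>j<kk1 P. \<exists>t<pp P. Am P j t \<noteq> 0) \<and>
     (\<forall>j<kk2 P. \<exists>t<pp P. Gm P j t \<noteq> 0)"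

definition primal_feasible :: "svr_data \<Rightarrow> bool" where
  "primal_feasible P \<longleftrightarrow>
     (\<exists>\<beta>::nat \<Rightarrow> real.
        (\<forall>j<kk1 P. (\<Sum>t<pp P. Am P j t * \<beta> t) \<le> bv P j) \<and>
        (\<forall>j<kk2 P. (\<Sum>t<pp P. Gm P j t * \<beta> t) = dv P j))"

end

theory Submission
  imports Defs
begin

text \<open>Every SMO update minimises the convex quadratic \<open>f\<close> along a feasible direction,
either exactly or clipped to the feasible segment, so \<open>f\<close> never increases. An unclipped
update of the block attaining \<open>\<Delta>\<close> is an exact line minimisation along a direction of
curvature at most \<open>B\<close> on which the slope of \<open>f\<close> is \<open>\<plusminus>\<Delta>\<close>, so it decreases \<open>f\<close> by
at least \<open>\<Delta>\<^sup>2 / (2B)\<close>; the curvatures are positive because the rows of \<open>X\<close> are distinct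
and the rows of \<open>A\<close>, \<open>\<Gamma>\<close> are nonzero. A primal feasible \<open>\<beta>\<close> bounds \<open>f\<close> from below on the
feasible set (weak duality), so the decreases are summable and tend to zero, which forces
\<open>\<Delta>\<close> to zero along the unclipped iterations. Each \<open>\<Delta>\<^sub>m\<close> is dominated by \<open>\<Delta>\<close>.\<close>

lemma sum_fun_upd_transfer:
  fixes f :: "'a \<Rightarrow> real"
  assumes "finite A" "i \<in> A" "j \<in> A" "i \<noteq> j"
  shows "sum (f(i := f i + t, j := f j - t)) A = sum f A"
proof -
  have "f(i := f i + t, j := f j - t) = (\<lambda>k. f k + t * (of_bool (k = i) - of_bool (k = j)))"
    using assms(4) by (auto simp: fun_eq_iff)
  then show ?thesis
    using assms by (simp add: sum.distrib right_diff_distrib sum_subtractf sum_distrib_left[symmetric])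
qed

lemma Qbar_sym: "Qbar P r s = Qbar P s r"
  unfolding Qbar_def by (simp add: mult.commute)

lemma fobj_add_scaled:
  fixes e :: "nat \<Rightarrow> real"
  shows "fobj P (\<lambda>r. th r + t * e r) = fobj P th + t * (\<Sum>r<dimN P. grad P th r * e r)
     + t\<^sup>2 / 2 * (\<Sum>r<dimN P. \<Sum>s<dimN P. e r * Qbar P r s * e s)"
proof -
  define N where "N = dimN P"
  define Q where "Q = Qbar P"
  have cross: "(\<Sum>r<N. \<Sum>s<N. th r * Q r s * e s) = (\<Sum>r<N. \<Sum>s<N. e r * Q r s * th s)"
    by (subst sum.swap) (simp add: Q_def Qbar_sym mult.commute mult.left_commute)
  have "(\<Sum>r<N. \<Sum>s<N. (th r + t * e r) * Q r s * (th s + t * e s)) =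
      (\<Sum>r<N. \<Sum>s<N. th r * Q r s * th s) + t * (\<Sum>r<N. \<Sum>s<N. e r * Q r s * th s)
      + t * (\<Sum>r<N. \<Sum>s<N. th r * Q r s * e s) + t\<^sup>2 * (\<Sum>r<N. \<Sum>s<N. e r * Q r s * e s)"
    by (simp add: algebra_simps power2_eq_square sum.distrib sum_distrib_left)
  moreover have "(\<Sum>r<N. grad P th r * e r)
      = (\<Sum>r<N. \<Sum>s<N. e r * Q r s * th s) + (\<Sum>r<N. lvec P r * e r)"
    unfolding grad_def N_def Q_def
    by (simp add: sum_distrib_left sum_distrib_right sum.distrib algebra_simps)
  ultimately show ?thesis
    unfolding fobj_def N_def[symmetric] Q_def[symmetric] cross
    by (simp add: algebra_simps sum.distrib sum_distrib_left)
qed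

lemma fobj_pair_update:
  assumes "a < dimN P" "b < dimN P" "a \<noteq> b"
  shows "fobj P (th(a := th a + t, b := th b - t)) = fobj P th + t * (grad P th a - grad P th b)
     + t\<^sup>2 / 2 * (Qbar P a a + Qbar P b b - 2 * Qbar P a b)"
proof -
  define e :: "nat \<Rightarrow> real" where "e r = of_bool (r = a) - of_bool (r = b)" for r
  have upd: "th(a := th a + t, b := th b - t) = (\<lambda>r. th r + t * e r)"
    using assms(3) by (auto simp: e_def)
  have lin: "(\<Sum>r<dimN P. grad P th r * e r) = grad P th a - grad P th b"
    using assms by (simp add: e_def right_diff_distrib sum_subtractf)
  have "(\<Sum>s<dimN P. e r * Qbar P r s * e s) = e r * (Qbar P r a - Qbar P r b)" for r
    using assms by (simp add: e_def right_diff_distrib sum_subtractf)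
  then have quad: "(\<Sum>r<dimN P. \<Sum>s<dimN P. e r * Qbar P r s * e s)
      = Qbar P a a + Qbar P b b - 2 * Qbar P a b"
    using assms by (simp add: e_def left_diff_distrib sum_subtractf Qbar_sym[of P b a])
  show ?thesis
    unfolding upd fobj_add_scaled lin quad ..
qed

lemma fobj_single_update:
  assumes "a < dimN P"
  shows "fobj P (th(a := x)) = fobj P th + (x - th a) * grad P th a
     + (x - th a)\<^sup>2 / 2 * Qbar P a a"
proof -
  define e :: "nat \<Rightarrow> real" where "e r = of_bool (r = a)" for r
  have "th(a := x) = (\<lambda>r. th r + (x - th a) * e r)"
    by (auto simp: e_def)
  moreover have "(\<Sum>s<dimN P. e r * Qbar P r s * e s) = e r * Qbar P r a" for r
    using assms by (simp add: e_def)
  ultimately show ?thesis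
    using assms by (simp add: fobj_add_scaled e_def)
qed

definition pair_curv :: "svr_data \<Rightarrow> nat \<Rightarrow> nat \<Rightarrow> real" where
  "pair_curv P i j = Qm P i i + Qm P j j - 2 * Qm P i j"

definition curvature_bound :: "svr_data \<Rightarrow> real" where
  "curvature_bound P = 1 + (\<Sum>i<nn P. \<Sum>j<nn P. pair_curv P i j)
     + (\<Sum>u<kk1 P. AAt P u u) + (\<Sum>u<kk2 P. GGt P u u)"

lemma Qbar_pair_curv:
  assumes "off = 0 \<or> off = nn P" "i < nn P" "j < nn P"
  shows "Qbar P (off + i) (off + i) + Qbar P (off + j) (off + j) - 2 * Qbar P (off + i) (off + j)
    = pair_curv P i j"
  using assms unfolding Qbar_def pair_curv_def Qm_def Mrow_def by auto

lemma Qbar_gamma_diag: "u < kk1 P \<Longrightarrow> Qbar P (2 * nn P + u) (2 * nn P + u) = AAt P u u"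
  unfolding Qbar_def AAt_def Mrow_def by simp

lemma Qbar_mu_diag:
  "u < kk2 P \<Longrightarrow> Qbar P (2 * nn P + kk1 P + u) (2 * nn P + kk1 P + u) = GGt P u u"
  unfolding Qbar_def GGt_def Mrow_def by simp

lemma pair_curv_eq_sum_squares:
  "pair_curv P i j = (\<Sum>t<pp P. (Xm P i t - Xm P j t) * (Xm P i t - Xm P j t))"
  unfolding pair_curv_def Qm_def by (simp add: algebra_simps sum.distrib sum_subtractf sum_distrib_left)

lemma sum_squares_pos:
  fixes f :: "nat \<Rightarrow> 'a::linordered_idom"
  assumes "t < p" "f t \<noteq> 0"
  shows "0 < (\<Sum>t<p. f t * f t)"
  using assms by (intro sum_pos2[of _ t]) (auto simp: zero_less_mult_iff linorder_neq_iff)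

lemma pair_curv_nonneg: "0 \<le> pair_curv P i j"
  unfolding pair_curv_eq_sum_squares by (intro sum_nonneg) simp

lemma AAt_diag_nonneg: "0 \<le> AAt P u u"
  unfolding AAt_def by (intro sum_nonneg) simp

lemma GGt_diag_nonneg: "0 \<le> GGt P u u"
  unfolding GGt_def by (intro sum_nonneg) simp

lemma pair_curv_pos:
  assumes "valid_data P" "i < nn P" "j < nn P" "i \<noteq> j"
  shows "0 < pair_curv P i j"
proof -
  have "\<exists>t<pp P. Xm P i t \<noteq> Xm P j t"
    using assms unfolding valid_data_def by blast
  then obtain t where "t < pp P" "Xm P i t - Xm P j t \<noteq> 0"
    by auto
  then show ?thesis
    unfolding pair_curv_eq_sum_squares by (rule sum_squares_pos)
qed

lemma AAt_diag_pos: "valid_data P \<Longrightarrow> u < kk1 P \<Longrightarrow> 0 < AAt P u u"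
  unfolding valid_data_def AAt_def using sum_squares_pos[of _ "pp P" "Am P u"] by auto

lemma GGt_diag_pos: "valid_data P \<Longrightarrow> u < kk2 P \<Longrightarrow> 0 < GGt P u u"
  unfolding valid_data_def GGt_def using sum_squares_pos[of _ "pp P" "Gm P u"] by auto

lemma curvature_bound_ge:
  shows curvature_bound_pos: "0 < curvature_bound P"
    and pair_curv_le_bound: "i < nn P \<Longrightarrow> j < nn P \<Longrightarrow> pair_curv P i j \<le> curvature_bound P"
    and AAt_diag_le_bound: "u < kk1 P \<Longrightarrow> AAt P u u \<le> curvature_bound P"
    and GGt_diag_le_bound: "v < kk2 P \<Longrightarrow> GGt P v v \<le> curvature_bound P"
proof -
  have Q: "0 \<le> (\<Sum>i<nn P. \<Sum>j<nn P. pair_curv P i j)"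
    and A: "0 \<le> (\<Sum>u<kk1 P. AAt P u u)" and G: "0 \<le> (\<Sum>u<kk2 P. GGt P u u)"
    by (simp_all add: sum_nonneg pair_curv_nonneg AAt_diag_nonneg GGt_diag_nonneg)
  then show "0 < curvature_bound P"
    unfolding curvature_bound_def by linarith
  show "pair_curv P i j \<le> curvature_bound P" if "i < nn P" "j < nn P"
  proof -
    have "pair_curv P i j \<le> (\<Sum>j<nn P. pair_curv P i j)"
      using that by (intro member_le_sum) (auto simp: pair_curv_nonneg)
    also have "\<dots> \<le> (\<Sum>i<nn P. \<Sum>j<nn P. pair_curv P i j)"
      using that by (intro member_le_sum[of i]) (auto intro!: sum_nonneg simp: pair_curv_nonneg)
    finally show ?thesis
      using A G unfolding curvature_bound_def by linarith
  qed
  show "AAt P u u \<le> curvature_bound P" if "u < kk1 P"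
    using that Q G member_le_sum[of u "{..<kk1 P}" "\<lambda>u. AAt P u u"]
    unfolding curvature_bound_def by (simp add: AAt_diag_nonneg)
  show "GGt P v v \<le> curvature_bound P" if "v < kk2 P"
    using that Q A member_le_sum[of v "{..<kk2 P}" "\<lambda>u. GGt P u u"]
    unfolding curvature_bound_def by (simp add: GGt_diag_nonneg)
qed

lemma sum_shift_block: "(\<Sum>k<n. g (n + k)) = sum g {n..<2 * (n::nat)}"
  using sum.shift_bounds_nat_ivl[of g 0 n n] by (simp add: add.commute lessThan_atLeast0 mult_2)

lemma feasible_iff:
  "feasible P th \<longleftrightarrow>
     (\<forall>p<2 * nn P. 0 \<le> th p \<and> th p \<le> Cc P / real (nn P))
     \<and> sum th {..<nn P} + sum th {nn P..<2 * nn P} \<le> Cc P * nuu P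
     \<and> sum th {..<nn P} = sum th {nn P..<2 * nn P}
     \<and> (\<forall>j<kk1 P. 0 \<le> th (2 * nn P + j))"
proof -
  have box: "(\<forall>p<2 * nn P. Q (th p)) \<longleftrightarrow> (\<forall>i<nn P. Q (th i) \<and> Q (th (nn P + i)))" for Q
    by (metis add_less_cancel_left less_diff_conv2 mult_2 not_less trans_less_add1 le_add_diff_inverse)
  show ?thesis
    unfolding feasible_def alphaB_def alphasB_def gammaB_def sum.distrib sum_subtractf sum_shift_block
    by (auto simp: box[of "\<lambda>x. 0 \<le> x \<and> x \<le> Cc P / real (nn P)"])
qed

lemma feasible_pair_update:
  assumes F: "feasible P th" and off: "off = 0 \<or> off = nn P"
    and ij: "i < nn P" "j < nn P" "i \<noteq> j"
    and box: "0 \<le> th (off + i) + t" "th (off + i) + t \<le> Cc P / real (nn P)"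
      "0 \<le> th (off + j) - t" "th (off + j) - t \<le> Cc P / real (nn P)"
  shows "feasible P (th(off + i := th (off + i) + t, off + j := th (off + j) - t))"
    (is "feasible P ?th'")
proof -
  have block_sum: "sum ?th' S = sum th S"
    if "finite S" "off + i \<in> S \<longleftrightarrow> off + j \<in> S" for S
    using that ij(3) sum_fun_upd_transfer[of S "off + i" "off + j" th t]
    by (cases "off + i \<in> S") (auto intro!: sum.cong)
  have "sum ?th' {..<nn P} = sum th {..<nn P}" "sum ?th' {nn P..<2 * nn P} = sum th {nn P..<2 * nn P}"
    using off ij by (intro block_sum; auto)+
  moreover have "off + i < 2 * nn P" "off + j < 2 * nn P"
    using off ij by auto
  ultimately show ?thesis
    using F box unfolding feasible_iff by auto
qed

lemma feasible_gamma_update: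
  assumes "feasible P th" "u < kk1 P" "0 \<le> x"
  shows "feasible P (th(2 * nn P + u := x))"
proof -
  have "sum (th(2 * nn P + u := x)) S = sum th S" if "S \<subseteq> {..<2 * nn P}" for S
    using that by (intro sum.cong) auto
  then show ?thesis
    using assms unfolding feasible_iff by (auto simp: subset_eq)
qed

lemma feasible_mu_update:
  assumes "feasible P th" "u < kk2 P"
  shows "feasible P (th(2 * nn P + kk1 P + u := x))"
proof -
  have "sum (th(2 * nn P + kk1 P + u := x)) S = sum th S" if "S \<subseteq> {..<2 * nn P}" for S
    using that by (intro sum.cong) auto
  then show ?thesis
    using assms unfolding feasible_iff by (auto simp: subset_eq)
qed

lemma quadratic_model_nonpos:
  fixes q G t :: real
  assumes "0 < q" "0 \<le> t \<and> t \<le> - G / q \<or> - G / q \<le> t \<and> t \<le> 0"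
  shows "t * G + t\<^sup>2 / 2 * q \<le> 0"
proof -
  have "t * (t - 2 * (- G / q)) \<le> 0"
    using assms(2) by (auto intro: mult_nonneg_nonpos mult_nonpos_nonneg)
  then have "q / 2 * (t * (t - 2 * (- G / q))) \<le> 0"
    using assms(1) by (simp add: mult_nonneg_nonpos)
  also have "q / 2 * (t * (t - 2 * (- G / q))) = t * G + t\<^sup>2 / 2 * q"
    using assms(1) by (simp add: field_simps power2_eq_square)
  finally show ?thesis .
qed

lemma quadratic_model_min_le:
  fixes q B G :: real
  assumes "0 < q" "q \<le> B"
  shows "(- G / q) * G + (- G / q)\<^sup>2 / 2 * q \<le> - (G\<^sup>2 / (2 * B))"
proof -
  have "(- G / q) * G + (- G / q)\<^sup>2 / 2 * q = - (G\<^sup>2 / (2 * q))"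
    using assms(1) by (simp add: field_simps power2_eq_square)
  moreover have "G\<^sup>2 / (2 * B) \<le> G\<^sup>2 / (2 * q)"
    using assms by (intro divide_left_mono) auto
  ultimately show ?thesis
    by linarith
qed

lemma clip_between_zero:
  fixes I1 I2 t :: real
  assumes "I1 \<le> 0" "0 \<le> I2"
  defines "s \<equiv> min (max I1 t) I2"
  shows "0 \<le> s \<and> s \<le> t \<or> t \<le> s \<and> s \<le> 0"
  using assms by linarith

lemma pair_update_descent:
  assumes V: "valid_data P" and F: "feasible P th"
    and off: "off = 0 \<or> off = nn P" and ij: "i < nn P" "j < nn P"
    and a: "a = (\<lambda>i. th (off + i))" and g: "g = (\<lambda>i. grad P th (off + i))"
    and gap: "g i < g j"
    and ts: "ts = pair_tstar P a g i j"
    and th': "th' = th(off + i := th (off + i) + ts, off + j := th (off + j) - ts)"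
  shows "feasible P th' \<and> fobj P th' \<le> fobj P th \<and>
    (ts = pair_tq P g i j \<longrightarrow> (g j - g i)\<^sup>2 / (2 * curvature_bound P) \<le> fobj P th - fobj P th')"
proof -
  define Cn where "Cn = Cc P / real (nn P)"
  define q where "q = pair_curv P i j"
  define tq where "tq = pair_tq P g i j"
  define I1 where "I1 = max (- a i) (a j - Cn)"
  define I2 where "I2 = min (a j) (Cn - a i)"
  have "i \<noteq> j"
    using gap by auto
  have q: "0 < q" "q \<le> curvature_bound P"
    unfolding q_def using pair_curv_pos[OF V ij \<open>i \<noteq> j\<close>] pair_curv_le_bound[OF ij] .
  have in_box: "off + i < 2 * nn P" "off + j < 2 * nn P"
    using off ij by auto
  have "\<forall>p<2 * nn P. 0 \<le> th p \<and> th p \<le> Cn"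
    using F unfolding feasible_iff Cn_def by blast
  then have box: "0 \<le> a i" "a i \<le> Cn" "0 \<le> a j" "a j \<le> Cn"
    using in_box unfolding a by auto
  have ts_clip: "ts = min (max I1 tq) I2"
    unfolding ts pair_tstar_def I1_def I2_def tq_def Cn_def Let_def ..
  have "I1 \<le> ts" "ts \<le> I2"
    using box unfolding ts_clip I1_def I2_def by linarith+
  then have "feasible P th'"
    unfolding th' using box
    by (intro feasible_pair_update[OF F off ij \<open>i \<noteq> j\<close>]) (simp_all add: a I1_def I2_def Cn_def)
  moreover have "fobj P th' = fobj P th + ts * (g i - g j) + ts\<^sup>2 / 2 * q"
    using fobj_pair_update[of "off + i" P "off + j" th ts] in_box \<open>i \<noteq> j\<close>
    unfolding th' g q_def dimN_def Qbar_pair_curv[OF off ij] by simp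
  moreover have tq_eq: "tq = - (g i - g j) / q"
    unfolding tq_def pair_tq_def q_def pair_curv_def ..
  have "0 \<le> ts \<and> ts \<le> tq \<or> tq \<le> ts \<and> ts \<le> 0"
    using clip_between_zero[of I1 I2 tq] box unfolding ts_clip I1_def I2_def by linarith
  then have "ts * (g i - g j) + ts\<^sup>2 / 2 * q \<le> 0"
    unfolding tq_eq by (rule quadratic_model_nonpos[OF q(1)])
  moreover have "ts * (g i - g j) + ts\<^sup>2 / 2 * q \<le> - ((g j - g i)\<^sup>2 / (2 * curvature_bound P))"
    if "ts = tq"
    using quadratic_model_min_le[OF q, of "g i - g j"] that tq_eq
    by (simp add: power2_commute)
  ultimately show ?thesis
    unfolding tq_def by auto
qed

lemma gamma_update_descent:
  assumes V: "valid_data P" and F: "feasible P th" and u: "u < kk1 P"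
    and v: "v = gammaB P th u - gG P th u / AAt P u u"
    and th': "th' = th(2 * nn P + u := max v 0)"
  shows "feasible P th' \<and> fobj P th' \<le> fobj P th \<and>
    (0 \<le> v \<longrightarrow> (gG P th u)\<^sup>2 / (2 * curvature_bound P) \<le> fobj P th - fobj P th')"
proof -
  define x where "x = th (2 * nn P + u)"
  define G where "G = gG P th u"
  define q where "q = AAt P u u"
  have q: "0 < q" "q \<le> curvature_bound P"
    unfolding q_def using AAt_diag_pos[OF V u] AAt_diag_le_bound[OF u] .
  have x: "0 \<le> x"
    using F u unfolding feasible_iff x_def by auto
  have "feasible P th'"
    unfolding th' using F u by (rule feasible_gamma_update) simp
  moreover have "fobj P th' = fobj P th + (max v 0 - x) * G + (max v 0 - x)\<^sup>2 / 2 * q"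
    using fobj_single_update[of "2 * nn P + u" P th "max v 0"] u
    unfolding th' x_def G_def q_def gG_def dimN_def by (simp add: Qbar_gamma_diag)
  moreover have v_eq: "v = x - G / q"
    unfolding v x_def G_def q_def gammaB_def ..
  have "0 \<le> max v 0 - x \<and> max v 0 - x \<le> - G / q \<or> - G / q \<le> max v 0 - x \<and> max v 0 - x \<le> 0"
    using x v_eq by auto
  then have "(max v 0 - x) * G + (max v 0 - x)\<^sup>2 / 2 * q \<le> 0"
    by (rule quadratic_model_nonpos[OF q(1)])
  moreover have "(max v 0 - x) * G + (max v 0 - x)\<^sup>2 / 2 * q \<le> - (G\<^sup>2 / (2 * curvature_bound P))"
    if "0 \<le> v"
    using quadratic_model_min_le[OF q, of G] that v_eq by simp
  ultimately show ?thesis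
    unfolding G_def by auto
qed

lemma mu_update_descent:
  assumes V: "valid_data P" and F: "feasible P th" and u: "u < kk2 P"
    and th': "th' = th(2 * nn P + kk1 P + u := muB P th u - gM P th u / GGt P u u)"
  shows "feasible P th' \<and> (gM P th u)\<^sup>2 / (2 * curvature_bound P) \<le> fobj P th - fobj P th'"
proof -
  define G where "G = gM P th u"
  define q where "q = GGt P u u"
  have q: "0 < q" "q \<le> curvature_bound P"
    unfolding q_def using GGt_diag_pos[OF V u] GGt_diag_le_bound[OF u] .
  have "feasible P th'"
    unfolding th' using F u by (rule feasible_mu_update)
  moreover have "fobj P th' = fobj P th + (- G / q) * G + (- G / q)\<^sup>2 / 2 * q"
    using fobj_single_update[of "2 * nn P + kk1 P + u" P th] u
    unfolding th' G_def q_def gM_def muB_def dimN_def by (simp add: Qbar_mu_diag)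
  ultimately show ?thesis
    using quadratic_model_min_le[OF q, of G] unfolding G_def by simp
qed

lemma delta_pair_choice: "pair_choice P a g i j \<Longrightarrow> delta_pair P a g = max (g j - g i) 0"
  unfolding pair_choice_def delta_pair_def by auto

lemma smo_step_descent:
  assumes V: "valid_data P" and F: "feasible P th" and pos: "0 < Delta P th"
    and step: "smo_step P th th' c"
  shows "feasible P th' \<and> fobj P th' \<le> fobj P th \<and>
    (\<not> c \<longrightarrow> (Delta P th)\<^sup>2 / (2 * curvature_bound P) \<le> fobj P th - fobj P th')"
  using step unfolding smo_step_def Let_def
proof (elim disjE conjE exE)
  fix i j
  assume D: "Delta1 P th = Delta P th" and ch: "pair_choice P (alphaB P th) (gA P th) i j"
    and "th' = th(i := th i + pair_tstar P (alphaB P th) (gA P th) i j,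
                  j := th j - pair_tstar P (alphaB P th) (gA P th) i j)"
    and "c = (pair_tstar P (alphaB P th) (gA P th) i j \<noteq> pair_tq P (gA P th) i j)"
  moreover have "Delta P th = gA P th j - gA P th i"
    using D pos delta_pair_choice[OF ch] unfolding Delta1_def by linarith
  moreover have "i < nn P" "j < nn P"
    using ch unfolding pair_choice_def Iup_def Ilow_def by auto
  ultimately show ?thesis
    using pair_update_descent[OF V F, of 0 i j "alphaB P th" "gA P th"] pos
    by (simp add: fun_eq_iff alphaB_def gA_def)
next
  fix i j
  assume D: "Delta2 P th = Delta P th" and ch: "pair_choice P (alphasB P th) (gAs P th) i j"
    and "th' = th(nn P + i := th (nn P + i) + pair_tstar P (alphasB P th) (gAs P th) i j,
                  nn P + j := th (nn P + j) - pair_tstar P (alphasB P th) (gAs P th) i j)"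
    and "c = (pair_tstar P (alphasB P th) (gAs P th) i j \<noteq> pair_tq P (gAs P th) i j)"
  moreover have "Delta P th = gAs P th j - gAs P th i"
    using D pos delta_pair_choice[OF ch] unfolding Delta2_def by linarith
  moreover have "i < nn P" "j < nn P"
    using ch unfolding pair_choice_def Iup_def Ilow_def by auto
  ultimately show ?thesis
    using pair_update_descent[OF V F, of "nn P" i j "alphasB P th" "gAs P th"] pos
    by (simp add: fun_eq_iff alphasB_def gAs_def)
next
  fix u
  assume D: "Delta3 P th = Delta P th" and u: "u < kk1 P"
    and min: "gG P th u = Min (gG P th ` {..<kk1 P})"
    and "th' = th(2 * nn P + u := max (gammaB P th u - gG P th u / AAt P u u) 0)"
    and "c = (gammaB P th u - gG P th u / AAt P u u < 0)"
  moreover have "Delta P th = - gG P th u"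
    using D pos min unfolding Delta3_def by linarith
  ultimately show ?thesis
    using gamma_update_descent[OF V F u refl] by simp
next
  fix u
  assume D: "Delta4 P th = Delta P th" and u: "u < kk2 P"
    and max: "\<bar>gM P th u\<bar> = Max ((\<lambda>s. \<bar>gM P th s\<bar>) ` {..<kk2 P})"
    and th': "th' = th(2 * nn P + kk1 P + u := muB P th u - gM P th u / GGt P u u)"
  have "(Delta P th)\<^sup>2 = (gM P th u)\<^sup>2"
    using D max unfolding Delta4_def by (metis power2_abs)
  moreover have "0 \<le> (gM P th u)\<^sup>2 / (2 * curvature_bound P)"
    using curvature_bound_pos[of P] by simp
  ultimately show ?thesis
    using mu_update_descent[OF V F u th'] by auto
qed

lemma quadratic_form_Qbar_eq_sum_squares:
  "(\<Sum>r<dimN P. \<Sum>s<dimN P. th r * Qbar P r s * th s)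
     = (\<Sum>t<pp P. (\<Sum>r<dimN P. Mrow P r t * th r) * (\<Sum>r<dimN P. Mrow P r t * th r))"
proof -
  have "(\<Sum>t<pp P. (\<Sum>r<dimN P. Mrow P r t * th r) * (\<Sum>s<dimN P. Mrow P s t * th s))
      = (\<Sum>r<dimN P. \<Sum>s<dimN P. \<Sum>t<pp P. (Mrow P r t * th r) * (Mrow P s t * th s))"
    unfolding sum_product by (subst sum.swap) (simp add: sum.swap[of _ "{..<pp P}"])
  then show ?thesis
    unfolding Qbar_def by (simp add: sum_distrib_left sum_distrib_right mult_ac)
qed

lemma Mrow_inner_swap:
  "(\<Sum>r<dimN P. (\<Sum>t<pp P. Mrow P r t * \<beta> t) * th r)
     = (\<Sum>t<pp P. \<beta> t * (\<Sum>r<dimN P. Mrow P r t * th r))"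
  by (simp add: sum_distrib_left sum_distrib_right mult_ac sum.swap[of _ "{..<pp P}"])

lemma lvec_term_lower_bound:
  assumes F: "feasible P th" and r: "r < dimN P"
    and A\<beta>: "\<And>j. j < kk1 P \<Longrightarrow> (\<Sum>t<pp P. Am P j t * \<beta> t) \<le> bv P j"
    and \<Gamma>\<beta>: "\<And>j. j < kk2 P \<Longrightarrow> (\<Sum>t<pp P. Gm P j t * \<beta> t) = dv P j"
  defines "m \<equiv> (\<Sum>t<pp P. Mrow P r t * \<beta> t)"
  shows "m * th r - (if r < 2 * nn P then \<bar>lvec P r - m\<bar> * (Cc P / real (nn P)) else 0)
    \<le> lvec P r * th r"
proof -
  consider (alpha) "r < 2 * nn P"
    | (gamma) j where "j < kk1 P" "r = 2 * nn P + j"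
    | (mu) j where "j < kk2 P" "r = 2 * nn P + kk1 P + j"
    using r unfolding dimN_def by (metis add_less_imp_less_left le_add_diff_inverse not_less)
  then show ?thesis
  proof cases
    case alpha
    then have "0 \<le> th r" "th r \<le> Cc P / real (nn P)"
      using F unfolding feasible_iff by auto
    then have "\<bar>(lvec P r - m) * th r\<bar> \<le> \<bar>lvec P r - m\<bar> * (Cc P / real (nn P))"
      unfolding abs_mult by (simp add: mult_left_mono del: times_divide_eq_right)
    then show ?thesis
      using alpha by (simp add: algebra_simps abs_le_iff)
  next
    case gamma
    then have "m \<le> lvec P r" "0 \<le> th r"
      using A\<beta>[of j] F unfolding m_def Mrow_def lvec_def feasible_iff by auto
    then show ?thesis
      using gamma by (simp add: mult_right_mono)
  next
    case mu
    then have "m = lvec P r"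
      using \<Gamma>\<beta>[of j] unfolding m_def Mrow_def lvec_def by (simp add: sum_negf)
    then show ?thesis
      using mu by simp
  qed
qed

lemma fobj_bounded_below:
  assumes "primal_feasible P"
  obtains L where "\<And>th. feasible P th \<Longrightarrow> L \<le> fobj P th"
proof -
  obtain \<beta> where A\<beta>: "\<And>j. j < kk1 P \<Longrightarrow> (\<Sum>t<pp P. Am P j t * \<beta> t) \<le> bv P j"
    and \<Gamma>\<beta>: "\<And>j. j < kk2 P \<Longrightarrow> (\<Sum>t<pp P. Gm P j t * \<beta> t) = dv P j"
    using assms unfolding primal_feasible_def by blast
  define m where "m r = (\<Sum>t<pp P. Mrow P r t * \<beta> t)" for r
  define h where "h r = (if r < 2 * nn P then \<bar>lvec P r - m r\<bar> * (Cc P / real (nn P)) else 0)" for r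
  have "- (\<Sum>t<pp P. \<beta> t * \<beta> t / 2) - (\<Sum>r<dimN P. h r) \<le> fobj P th" if F: "feasible P th" for th
  proof -
    define w where "w t = (\<Sum>r<dimN P. Mrow P r t * th r)" for t
    have "(\<Sum>t<pp P. \<beta> t * w t) - (\<Sum>r<dimN P. h r) = (\<Sum>r<dimN P. m r * th r - h r)"
      unfolding m_def w_def Mrow_inner_swap sum_subtractf ..
    also have "\<dots> \<le> (\<Sum>r<dimN P. lvec P r * th r)"
      using lvec_term_lower_bound[OF F _ A\<beta> \<Gamma>\<beta>] unfolding m_def h_def
      by (intro sum_mono) simp
    finally have lin: "(\<Sum>t<pp P. \<beta> t * w t) - (\<Sum>r<dimN P. h r) \<le> (\<Sum>r<dimN P. lvec P r * th r)" .
    have "(\<Sum>t<pp P. - (\<beta> t * \<beta> t / 2)) \<le> (\<Sum>t<pp P. w t * w t / 2 + \<beta> t * w t)"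
    proof (rule sum_mono)
      fix t
      have "0 \<le> (w t + \<beta> t) * (w t + \<beta> t)"
        by simp
      then show "- (\<beta> t * \<beta> t / 2) \<le> w t * w t / 2 + \<beta> t * w t"
        by (simp add: algebra_simps)
    qed
    then show ?thesis
      using lin unfolding fobj_def quadratic_form_Qbar_eq_sum_squares w_def[symmetric]
      by (simp add: sum_negf sum.distrib sum_divide_distrib)
  qed
  then show thesis
    using that by blast
qed

lemma sufficient_decrease_tendsto_zero:
  fixes F D :: "nat \<Rightarrow> real"
  assumes dec: "\<And>k. F (Suc k) \<le> F k" and bdd: "\<And>k. L \<le> F k" and C: "0 < C"
    and suff: "\<And>k. k \<in> K \<Longrightarrow> (D k)\<^sup>2 / C \<le> F k - F (Suc k)"
  shows "\<forall>\<epsilon>>0. \<exists>N. \<forall>k\<in>K. N \<le> k \<longrightarrow> \<bar>D k\<bar> < \<epsilon>"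
proof (intro allI impI)
  fix \<epsilon> :: real
  assume "0 < \<epsilon>"
  have "summable (\<lambda>k. F k - F (Suc k))"
  proof (rule summableI_nonneg_bounded)
    show "(\<Sum>k<n. F k - F (Suc k)) \<le> F 0 - L" for n
      using bdd[of n] by (simp add: sum_lessThan_telescope')
  qed (use dec in auto)
  then have "(\<lambda>k. F k - F (Suc k)) \<longlonglongrightarrow> 0"
    by (rule summable_LIMSEQ_zero)
  moreover have "0 < \<epsilon>\<^sup>2 / C"
    using \<open>0 < \<epsilon>\<close> C by simp
  ultimately obtain N where N: "\<And>k. N \<le> k \<Longrightarrow> F k - F (Suc k) < \<epsilon>\<^sup>2 / C"
    using LIMSEQ_D by fastforce
  have "\<bar>D k\<bar> < \<epsilon>" if "k \<in> K" "N \<le> k" for k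
  proof -
    have "(D k)\<^sup>2 / C < \<epsilon>\<^sup>2 / C"
      using suff[OF that(1)] N[OF that(2)] by linarith
    then have "\<bar>D k\<bar>\<^sup>2 < \<epsilon>\<^sup>2"
      using C by (simp add: divide_less_cancel)
    then show ?thesis
      using \<open>0 < \<epsilon>\<close> by (simp add: power2_less_imp_less)
  qed
  then show "\<exists>N. \<forall>k\<in>K. N \<le> k \<longrightarrow> \<bar>D k\<bar> < \<epsilon>"
    by blast
qed

lemma abs_Delta_components_le:
  assumes "valid_data P"
  shows "\<bar>Delta1 P th\<bar> \<le> Delta P th" "\<bar>Delta2 P th\<bar> \<le> Delta P th"
    "\<bar>Delta3 P th\<bar> \<le> Delta P th" "\<bar>Delta4 P th\<bar> \<le> Delta P th"
proof -
  have "0 < kk2 P"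
    using assms unfolding valid_data_def by simp
  then have "\<bar>gM P th 0\<bar> \<le> Delta4 P th"
    unfolding Delta4_def by (intro Max_ge) auto
  moreover have "0 \<le> Delta1 P th" "0 \<le> Delta2 P th" "0 \<le> Delta3 P th"
    unfolding Delta1_def Delta2_def Delta3_def delta_pair_def by auto
  ultimately show "\<bar>Delta1 P th\<bar> \<le> Delta P th" "\<bar>Delta2 P th\<bar> \<le> Delta P th"
    "\<bar>Delta3 P th\<bar> \<le> Delta P th" "\<bar>Delta4 P th\<bar> \<le> Delta P th"
    unfolding Delta_def by auto
qed

theorem lemmaD4:
  fixes P :: svr_data
    and th :: "nat \<Rightarrow> nat \<Rightarrow> real"
    and clip :: "nat \<Rightarrow> bool"
    and K :: "nat set"
  assumes "valid_data P"
    and "primal_feasible P"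
    and "feasible P (th 0)"
    and "\<And>k. 0 < Delta P (th k)"
    and "\<And>k. smo_step P (th k) (th (Suc k)) (clip k)"
    and "infinite K"
    and "\<And>k. k \<in> K \<Longrightarrow> \<not> clip k"
  shows "(\<forall>\<epsilon>>0. \<exists>N. \<forall>k\<in>K. N \<le> k \<longrightarrow> \<bar>Delta P (th k)\<bar> < \<epsilon>)
       \<and> (\<forall>\<epsilon>>0. \<exists>N. \<forall>k\<in>K. N \<le> k \<longrightarrow> \<bar>Delta1 P (th k)\<bar> < \<epsilon>)
       \<and> (\<forall>\<epsilon>>0. \<exists>N. \<forall>k\<in>K. N \<le> k \<longrightarrow> \<bar>Delta2 P (th k)\<bar> < \<epsilon>)
       \<and> (\<forall>\<epsilon>>0. \<exists>N. \<forall>k\<in>K. N \<le> k \<longrightarrow> \<bar>Delta3 P (th k)\<bar> < \<epsilon>)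
       \<and> (\<forall>\<epsilon>>0. \<exists>N. \<forall>k\<in>K. N \<le> k \<longrightarrow> \<bar>Delta4 P (th k)\<bar> < \<epsilon>)"
proof -
  have feasible: "feasible P (th k)" for k
    by (induction k) (use assms(3) smo_step_descent[OF assms(1) _ assms(4,5)] in auto)
  note descent = smo_step_descent[OF assms(1) feasible assms(4,5)]
  obtain L where L: "\<And>k. L \<le> fobj P (th k)"
    using fobj_bounded_below[OF assms(2)] feasible by metis
  have B: "0 < 2 * curvature_bound P"
    using curvature_bound_pos[of P] by simp
  have vanishes: "\<forall>\<epsilon>>0. \<exists>N. \<forall>k\<in>K. N \<le> k \<longrightarrow> \<bar>D k\<bar> < \<epsilon>"
    if "\<And>k. \<bar>D k\<bar> \<le> Delta P (th k)" for D
  proof (rule sufficient_decrease_tendsto_zero[OF _ L B])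
    fix k
    assume "k \<in> K"
    have "\<bar>D k\<bar>\<^sup>2 \<le> (Delta P (th k))\<^sup>2"
      using that[of k] by (intro power_mono) auto
    then have "(D k)\<^sup>2 / (2 * curvature_bound P) \<le> (Delta P (th k))\<^sup>2 / (2 * curvature_bound P)"
      using B by (simp add: divide_right_mono)
    then show "(D k)\<^sup>2 / (2 * curvature_bound P) \<le> fobj P (th k) - fobj P (th (Suc k))"
      using descent[of k] assms(7)[OF \<open>k \<in> K\<close>] by linarith
  qed (use descent in auto)
  show ?thesis
    using assms(4) abs_Delta_components_le[OF assms(1)]
    by (intro conjI vanishes) (simp_all add: less_imp_le)
qed

end
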